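(* There are absolute constants $c>0$ and $C$ such that for all $n$: if $f,g\colon\{0,1\}^n\to\{0,1\}$ are uniformly random balanced functions, then with probability at least $1-2^{-2^{cn}}$ there exists a mapping $\phi$ from $f$ to $g$ with ${\sf avgStretch}(\phi)\le C$ and ${\sf avgStretch}(\phi^{-1})\le C$.
   Context: A balanced function has exactly $2^{n-1}$ inputs mapped to $1$; uniformly random balanced means uniform among such functions. A mapping from $f$ to $g$ is a bijection $\phi$ of $\{0,1\}^n$ with $f(z)=g(\phi(z))$ for all $z$. ${\sf avgStretch}(\phi)=\mathbb{E}_{x,i}[{\sf dist}(\phi(x),\phi(x+e_i))]$ with $x$ uniform in $\{0,1\}^n$, $i$ uniform in $[n]$, ${\sf dist}$ Hamming distance. *)

theory Defs
  imports Complex_Main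
begin

text \<open>Points of the Boolean cube {0,1}^n are encoded as subsets of {..<n}
  (the set of coordinates equal to 1).\<close>

definition cube :: "nat \<Rightarrow> nat set set" where
  "cube n = Pow {..<n}"

definition flip :: "nat set \<Rightarrow> nat \<Rightarrow> nat set" where
  "flip x i = x - {i} \<union> ({i} - x)"

definition hdist :: "nat set \<Rightarrow> nat set \<Rightarrow> nat" where
  "hdist x y = card ((x - y) \<union> (y - x))"

text \<open>Boolean functions on the cube, taken extensionally (False outside the cube).\<close>
definition boolfuns :: "nat \<Rightarrow> (nat set \<Rightarrow> bool) set" where
  "boolfuns n = {f. \<forall>x. x \<notin> cube n \<longrightarrow> f x = False}"

definition balanced :: "nat \<Rightarrow> (nat set \<Rightarrow> bool) \<Rightarrow> bool" where
  "balanced n f \<longleftrightarrow> f \<in> boolfuns n \<and> real (card {x \<in> cube n. f x}) = 2 ^ n / 2"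

definition balanced_funs :: "nat \<Rightarrow> (nat set \<Rightarrow> bool) set" where
  "balanced_funs n = {f. balanced n f}"

definition is_mapping :: "nat \<Rightarrow> (nat set \<Rightarrow> bool) \<Rightarrow> (nat set \<Rightarrow> bool) \<Rightarrow> (nat set \<Rightarrow> nat set) \<Rightarrow> bool" where
  "is_mapping n f g \<phi> \<longleftrightarrow> bij_betw \<phi> (cube n) (cube n) \<and> (\<forall>z \<in> cube n. f z = g (\<phi> z))"

definition avgStretch :: "nat \<Rightarrow> (nat set \<Rightarrow> nat set) \<Rightarrow> real" where
  "avgStretch n \<phi> = (\<Sum>x \<in> cube n. \<Sum>i < n. real (hdist (\<phi> x) (\<phi> (flip x i)))) / (real n * 2 ^ n)"

end

theory Submission
  imports Defs "HOL-Combinatorics.Transposition" "HOL-Probability.Hoeffding" "HOL-Real_Asymp.Real_Asymp"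
begin

text \<open>A mapping \<open>\<phi>\<close> whose total displacement \<open>\<Sum>\<^sub>x dist(x, \<phi> x)\<close> is \<open>O(2\<^sup>n)\<close> has bounded
  average stretch, and so has its inverse, by the triangle inequality through x and \<open>x + e\<^sub>i\<close>.
  Such a \<phi> is built level by level: at level k it fixes the coordinates \<open>\<ge> k\<close>, and inside each
  block of points sharing them the points mapped wrongly are all of one kind. Passing to level
  k + 1 merges pairs of blocks and repairs the remaining mismatches by swaps of length
  \<open>\<le> k + 1\<close>; their number is at most the total imbalance between f and g over the \<open>2\<^sup>n\<^sup>-\<^sup>k\<close>
  level-k blocks. By a Chernoff bound, the ones of a uniformly random function have imbalance
  below \<open>2\<^sup>n 2\<^sup>-\<^sup>k\<^sup>/\<^sup>3\<close> at every level except with probability \<open>n exp (-2\<^sup>n\<^sup>/\<^sup>3)\<close>; since balanced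
  functions are a fraction \<open>\<ge> 2\<^sup>-\<^sup>n\<close> of all functions, the same holds for all but a doubly
  exponentially small fraction of them, and then the total displacement is
  \<open>O(2\<^sup>n \<Sum>\<^sub>k (k + 1) 2\<^sup>-\<^sup>k\<^sup>/\<^sup>3) = O(2\<^sup>n)\<close>.\<close>

lemma finite_cube [simp]: "finite (cube n)"
  by (simp add: cube_def)

lemma card_cube: "card (cube n) = 2 ^ n"
  by (simp add: cube_def card_Pow)

lemma finite_of_mem_cube: "x \<in> cube n \<Longrightarrow> finite x"
  by (auto simp: cube_def intro: finite_subset)

lemma hdist_commute: "hdist x y = hdist y x"
  unfolding hdist_def by (simp add: Un_commute)

lemma hdist_triangle:
  assumes "finite x" "finite y" "finite z"
  shows "hdist x z \<le> hdist x y + hdist y z"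
proof -
  have "hdist x z \<le> card ((x - y \<union> (y - x)) \<union> (y - z \<union> (z - y)))"
    unfolding hdist_def using assms by (intro card_mono) auto
  also have "\<dots> \<le> hdist x y + hdist y z"
    unfolding hdist_def by (rule card_Un_le)
  finally show ?thesis .
qed

lemma hdist_le_card:
  assumes "finite A" "x - y \<union> (y - x) \<subseteq> A"
  shows "hdist x y \<le> card A"
  unfolding hdist_def using assms by (rule card_mono)

lemma hdist_le_dim: "x \<in> cube n \<Longrightarrow> y \<in> cube n \<Longrightarrow> hdist x y \<le> n"
  using hdist_le_card[of "{..<n}" x y] by (auto simp: cube_def)

lemma hdist_flip: "hdist x (flip x i) = 1"
proof -
  have "x - flip x i \<union> (flip x i - x) = {i}" by (auto simp: flip_def)
  thus ?thesis by (simp add: hdist_def)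
qed

lemma flip_in_cube: "x \<in> cube n \<Longrightarrow> i < n \<Longrightarrow> flip x i \<in> cube n"
  by (auto simp: cube_def flip_def)

lemma bij_betw_flip: "i < n \<Longrightarrow> bij_betw (\<lambda>x. flip x i) (cube n) (cube n)"
  by (rule bij_betw_byWitness[where f' = "\<lambda>x. flip x i"]) (auto simp: flip_def cube_def)

section \<open>Displacement and average stretch\<close>

definition displacement :: "nat \<Rightarrow> (nat set \<Rightarrow> nat set) \<Rightarrow> real" where
  "displacement n \<phi> = (\<Sum>x\<in>cube n. real (hdist x (\<phi> x)))"

lemma avgStretch_le_dim:
  assumes "\<phi> ` cube n \<subseteq> cube n"
  shows "avgStretch n \<phi> \<le> n"
proof (cases "n = 0")
  case False
  have "(\<Sum>x\<in>cube n. \<Sum>i<n. real (hdist (\<phi> x) (\<phi> (flip x i)))) \<le> (\<Sum>x\<in>cube n. \<Sum>i<n. real n)"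
    using assms by (intro sum_mono) (auto intro!: hdist_le_dim flip_in_cube)
  also have "\<dots> = real n * (real n * 2 ^ n)" by (simp add: card_cube)
  finally show ?thesis using False by (simp add: avgStretch_def divide_le_eq mult.assoc)
qed (simp add: avgStretch_def)

text \<open>Going around through x and x + e_i bounds the stretch of an edge by the displacements
  of its two endpoints plus one; each point is an endpoint of n edges in each direction.\<close>

lemma avgStretch_le_displacement:
  assumes "\<phi> ` cube n \<subseteq> cube n" "n > 0"
  shows "avgStretch n \<phi> \<le> 1 + 2 * displacement n \<phi> / 2 ^ n"
proof -
  let ?D = "\<lambda>x. real (hdist x (\<phi> x))"
  have edge: "real (hdist (\<phi> x) (\<phi> (flip x i))) \<le> ?D x + 1 + ?D (flip x i)"
    if x: "x \<in> cube n" and i: "i < n" for x i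
  proof -
    have fin: "finite x" "finite (flip x i)" "finite (\<phi> x)" "finite (\<phi> (flip x i))"
      using x i assms(1) by (auto intro: finite_of_mem_cube flip_in_cube)
    have "hdist (\<phi> x) (\<phi> (flip x i)) \<le> hdist (\<phi> x) x + hdist x (\<phi> (flip x i))"
      using fin by (intro hdist_triangle)
    also have "hdist x (\<phi> (flip x i)) \<le> hdist x (flip x i) + hdist (flip x i) (\<phi> (flip x i))"
      using fin by (intro hdist_triangle)
    finally show ?thesis by (simp add: hdist_flip hdist_commute)
  qed
  have flip_sum: "(\<Sum>x\<in>cube n. ?D (flip x i)) = displacement n \<phi>" if "i < n" for i
    unfolding displacement_def using bij_betw_flip[OF that] by (rule sum.reindex_bij_betw)
  have "(\<Sum>x\<in>cube n. \<Sum>i<n. real (hdist (\<phi> x) (\<phi> (flip x i))))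
      \<le> (\<Sum>x\<in>cube n. \<Sum>i<n. ?D x + 1 + ?D (flip x i))"
    by (intro sum_mono edge) auto
  also have "\<dots> = (\<Sum>i<n. \<Sum>x\<in>cube n. ?D x + 1 + ?D (flip x i))"
    by (rule sum.swap)
  also have "\<dots> = real n * (2 ^ n + 2 * displacement n \<phi>)"
    by (simp add: sum.distrib flip_sum card_cube displacement_def)
  finally have "avgStretch n \<phi> \<le> real n * (2 ^ n + 2 * displacement n \<phi>) / (real n * 2 ^ n)"
    unfolding avgStretch_def by (intro divide_right_mono) auto
  also have "\<dots> = 1 + 2 * displacement n \<phi> / 2 ^ n"
    using assms(2) by (simp add: field_simps)
  finally show ?thesis .
qed

lemma displacement_the_inv_into:
  assumes "bij_betw \<phi> (cube n) (cube n)"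
  shows "displacement n (the_inv_into (cube n) \<phi>) = displacement n \<phi>"
proof -
  have "displacement n (the_inv_into (cube n) \<phi>)
      = (\<Sum>x\<in>cube n. real (hdist (\<phi> x) (the_inv_into (cube n) \<phi> (\<phi> x))))"
    unfolding displacement_def using assms by (rule sum.reindex_bij_betw[symmetric])
  also have "\<dots> = displacement n \<phi>"
    unfolding displacement_def using assms
    by (intro sum.cong refl) (simp add: the_inv_into_f_f bij_betw_def hdist_commute)
  finally show ?thesis .
qed

lemma avgStretch_mapping_le_displacement:
  assumes "bij_betw \<phi> (cube n) (cube n)" "n > 0"
  shows "avgStretch n \<phi> \<le> 1 + 2 * displacement n \<phi> / 2 ^ n"
    and "avgStretch n (the_inv_into (cube n) \<phi>) \<le> 1 + 2 * displacement n \<phi> / 2 ^ n"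
  using avgStretch_le_displacement[of \<phi> n] avgStretch_le_displacement[of "the_inv_into (cube n) \<phi>" n]
    assms bij_betw_the_inv_into[OF assms(1)] displacement_the_inv_into[OF assms(1)]
  by (auto simp: bij_betw_def)

section \<open>Matching level by level\<close>

definition high_coords :: "nat \<Rightarrow> nat set \<Rightarrow> nat set" where
  "high_coords k x = x - {..<k}"

definition block :: "nat \<Rightarrow> nat \<Rightarrow> nat set \<Rightarrow> nat set set" where
  "block n k S = {x \<in> cube n. high_coords k x = S}"

definition fixes_high_coords :: "nat \<Rightarrow> nat \<Rightarrow> (nat set \<Rightarrow> nat set) \<Rightarrow> bool" where
  "fixes_high_coords n k \<phi> \<longleftrightarrow> (\<forall>x\<in>cube n. high_coords k (\<phi> x) = high_coords k x)"

definition ones_to_zeros ::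
    "nat \<Rightarrow> (nat set \<Rightarrow> bool) \<Rightarrow> (nat set \<Rightarrow> bool) \<Rightarrow> (nat set \<Rightarrow> nat set) \<Rightarrow> nat set set" where
  "ones_to_zeros n f g \<phi> = {x \<in> cube n. f x \<and> \<not> g (\<phi> x)}"

definition zeros_to_ones ::
    "nat \<Rightarrow> (nat set \<Rightarrow> bool) \<Rightarrow> (nat set \<Rightarrow> bool) \<Rightarrow> (nat set \<Rightarrow> nat set) \<Rightarrow> nat set set" where
  "zeros_to_ones n f g \<phi> = {x \<in> cube n. \<not> f x \<and> g (\<phi> x)}"

definition one_sided ::
    "nat \<Rightarrow> nat \<Rightarrow> (nat set \<Rightarrow> bool) \<Rightarrow> (nat set \<Rightarrow> bool) \<Rightarrow> (nat set \<Rightarrow> nat set) \<Rightarrow> bool" where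
  "one_sided n k f g \<phi> \<longleftrightarrow>
     (\<forall>x\<in>ones_to_zeros n f g \<phi>. \<forall>y\<in>zeros_to_ones n f g \<phi>. high_coords k x \<noteq> high_coords k y)"

definition discrepancy :: "nat \<Rightarrow> nat \<Rightarrow> (nat set \<Rightarrow> bool) \<Rightarrow> (nat set \<Rightarrow> bool) \<Rightarrow> real" where
  "discrepancy n k f g = (\<Sum>S\<in>Pow {k..<n}.
     \<bar>real (card {x \<in> block n k S. f x}) - real (card {x \<in> block n k S. g x})\<bar>)"

lemma high_coords_in_Pow: "x \<in> cube n \<Longrightarrow> high_coords k x \<in> Pow {k..<n}"
  by (auto simp: high_coords_def cube_def)

lemma hdist_le_of_high_coords_eq:
  assumes "high_coords k x = high_coords k y"
  shows "hdist x y \<le> k"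
proof -
  have "x - y \<union> (y - x) \<subseteq> {..<k}"
    using assms unfolding high_coords_def by blast
  then show ?thesis using hdist_le_card[of "{..<k}" x y] by simp
qed

lemma high_coords_Suc: "high_coords (Suc k) x = high_coords k x - {k}"
  by (auto simp: high_coords_def)

lemma swap_mismatches:
  assumes \<phi>: "bij_betw \<phi> (cube n) (cube n)" "fixes_high_coords n k \<phi>"
    and x: "x \<in> ones_to_zeros n f g \<phi>" and y: "y \<in> zeros_to_ones n f g \<phi>"
    and xy: "high_coords k x = high_coords k y"
  defines "\<psi> \<equiv> \<phi> \<circ> Transposition.transpose x y"
  shows "bij_betw \<psi> (cube n) (cube n)" "fixes_high_coords n k \<psi>"
    "ones_to_zeros n f g \<psi> = ones_to_zeros n f g \<phi> - {x}"
    "displacement n \<psi> \<le> displacement n \<phi> + 2 * real k"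
proof -
  have xc: "x \<in> cube n" and yc: "y \<in> cube n" and "x \<noteq> y"
    using x y by (auto simp: ones_to_zeros_def zeros_to_ones_def)
  show "bij_betw \<psi> (cube n) (cube n)"
    unfolding \<psi>_def using \<phi>(1) xc yc by (intro bij_betw_trans[of _ _ "cube n"]) auto
  show "fixes_high_coords n k \<psi>"
    using \<phi>(2) xc yc xy by (auto simp: fixes_high_coords_def \<psi>_def Transposition.transpose_def)
  show "ones_to_zeros n f g \<psi> = ones_to_zeros n f g \<phi> - {x}"
    using x y by (auto simp: ones_to_zeros_def zeros_to_ones_def \<psi>_def Transposition.transpose_def)
  have fin: "finite x" "finite y" "finite (\<phi> x)" "finite (\<phi> y)"
    using xc yc \<phi>(1) by (auto simp: bij_betw_def intro: finite_of_mem_cube)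
  have "displacement n \<psi> - displacement n \<phi>
      = (\<Sum>z\<in>{x, y}. real (hdist z (\<psi> z)) - real (hdist z (\<phi> z)))"
    unfolding displacement_def sum_subtractf[symmetric] using xc yc
    by (intro sum.mono_neutral_right) (auto simp: \<psi>_def)
  also have "\<dots> = real (hdist x (\<phi> y)) - hdist x (\<phi> x) + (real (hdist y (\<phi> x)) - hdist y (\<phi> y))"
    using \<open>x \<noteq> y\<close> by (simp add: \<psi>_def)
  also have "\<dots> \<le> 2 * real (hdist x y)"
    using hdist_triangle[of x y "\<phi> y"] hdist_triangle[of y x "\<phi> x"] fin
    by (simp add: hdist_commute[of y x])
  also have "\<dots> \<le> 2 * k"
    using hdist_le_of_high_coords_eq[OF xy] by simp
  finally show "displacement n \<psi> \<le> displacement n \<phi> + 2 * real k" by simp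
qed

lemma one_sided_by_swaps:
  assumes "bij_betw \<phi> (cube n) (cube n)" "fixes_high_coords n k \<phi>"
  shows "\<exists>\<psi>. bij_betw \<psi> (cube n) (cube n) \<and> fixes_high_coords n k \<psi> \<and> one_sided n k f g \<psi> \<and>
      displacement n \<psi> \<le> displacement n \<phi> + 2 * real k * card (ones_to_zeros n f g \<phi>)"
  using assms
proof (induction "card (ones_to_zeros n f g \<phi>)" arbitrary: \<phi> rule: less_induct)
  case less
  show ?case
  proof (cases "one_sided n k f g \<phi>")
    case True
    with less.prems show ?thesis by auto
  next
    case False
    then obtain x y where x: "x \<in> ones_to_zeros n f g \<phi>" and y: "y \<in> zeros_to_ones n f g \<phi>"
      and xy: "high_coords k x = high_coords k y"
      unfolding one_sided_def by blast
    note swap = swap_mismatches[OF less.prems x y xy]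
    have card_swap:
      "card (ones_to_zeros n f g \<phi>) = Suc (card (ones_to_zeros n f g (\<phi> \<circ> Transposition.transpose x y)))"
      unfolding swap(3) using x by (intro card_Suc_Diff1[symmetric]) (auto simp: ones_to_zeros_def)
    obtain \<psi> where "bij_betw \<psi> (cube n) (cube n)" "fixes_high_coords n k \<psi>" "one_sided n k f g \<psi>"
      "displacement n \<psi> \<le> displacement n (\<phi> \<circ> Transposition.transpose x y)
         + 2 * real k * card (ones_to_zeros n f g (\<phi> \<circ> Transposition.transpose x y))"
      using less.hyps[OF _ swap(1,2)] card_swap by auto
    with swap(4) card_swap show ?thesis
      by (intro exI[of _ \<psi>]) (auto simp: algebra_simps)
  qed
qed

lemma card_diff_eq_mismatch_diff:
  assumes "finite B" "bij_betw \<phi> B B"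
  shows "real (card {x\<in>B. f x}) - real (card {x\<in>B. g x}) =
         real (card {x\<in>B. f x \<and> \<not> g (\<phi> x)}) - real (card {x\<in>B. \<not> f x \<and> g (\<phi> x)})"
proof -
  have ind: "real (card {x\<in>B. P x}) = (\<Sum>x\<in>B. of_bool (P x))" for P
    using assms(1) by (simp add: Collect_conj_eq Int_commute)
  have "(\<Sum>x\<in>B. of_bool (g x)) = (\<Sum>x\<in>B. of_bool (g (\<phi> x)) :: real)"
    using assms(2) by (rule sum.reindex_bij_betw[symmetric])
  also have "(\<Sum>x\<in>B. of_bool (f x)) - \<dots>
      = (\<Sum>x\<in>B. of_bool (f x \<and> \<not> g (\<phi> x)) - of_bool (\<not> f x \<and> g (\<phi> x)))"
    unfolding sum_subtractf[symmetric] by (intro sum.cong) auto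
  finally show ?thesis
    unfolding ind sum_subtractf .
qed

lemma bij_betw_block:
  assumes "bij_betw \<phi> (cube n) (cube n)" "fixes_high_coords n k \<phi>"
  shows "bij_betw \<phi> (block n k S) (block n k S)"
proof -
  have inj: "inj_on \<phi> (block n k S)"
    using bij_betw_imp_inj_on[OF assms(1)] by (rule inj_on_subset) (auto simp: block_def)
  have "\<phi> ` block n k S \<subseteq> block n k S"
    using assms by (auto simp: block_def fixes_high_coords_def bij_betw_def)
  moreover have "card (\<phi> ` block n k S) = card (block n k S)"
    using inj by (rule card_image)
  ultimately have "\<phi> ` block n k S = block n k S"
    by (intro card_subset_eq) (auto simp: block_def)
  with inj show ?thesis by (simp add: bij_betw_def)
qed

text \<open>Inside a block the mismatches are of one kind only, so their number in the block is the
  difference of the counts of f and g there.\<close>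

lemma card_ones_to_zeros_le_discrepancy:
  assumes "bij_betw \<phi> (cube n) (cube n)" "fixes_high_coords n k \<phi>" "one_sided n k f g \<phi>"
  shows "real (card (ones_to_zeros n f g \<phi>)) \<le> discrepancy n k f g"
proof -
  let ?M = "ones_to_zeros n f g \<phi>"
  have "high_coords k ` ?M \<subseteq> Pow {k..<n}"
    using high_coords_in_Pow by (auto simp: ones_to_zeros_def)
  then have "card ?M = (\<Sum>S\<in>Pow {k..<n}. card {x\<in>?M. high_coords k x = S})"
    using sum.group[of ?M "Pow {k..<n}" "high_coords k" "\<lambda>_. 1::nat"]
    by (simp add: ones_to_zeros_def)
  also have "real \<dots> \<le> discrepancy n k f g"
    unfolding discrepancy_def of_nat_sum
  proof (intro sum_mono)
    fix S
    let ?B = "block n k S"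
    have count: "real (card {x\<in>?B. f x}) - real (card {x\<in>?B. g x}) =
        real (card {x\<in>?B. f x \<and> \<not> g (\<phi> x)}) - real (card {x\<in>?B. \<not> f x \<and> g (\<phi> x)})"
      using bij_betw_block[OF assms(1,2)] by (intro card_diff_eq_mismatch_diff) (auto simp: block_def)
    have one_kind: "{x\<in>?B. f x \<and> \<not> g (\<phi> x)} = {} \<or> {x\<in>?B. \<not> f x \<and> g (\<phi> x)} = {}"
      using assms(3) by (force simp: one_sided_def block_def ones_to_zeros_def zeros_to_ones_def)
    have in_block: "{x\<in>?M. high_coords k x = S} = {x\<in>?B. f x \<and> \<not> g (\<phi> x)}"
      by (auto simp: ones_to_zeros_def block_def)
    have "real (card A) \<le> \<bar>real (card A) - real (card C)\<bar>" if "A = {} \<or> C = {}" for A C :: "'a set"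
      using that by auto
    from this[OF one_kind] show "real (card {x\<in>?M. high_coords k x = S})
        \<le> \<bar>real (card {x\<in>?B. f x}) - real (card {x\<in>?B. g x})\<bar>"
      unfolding count in_block .
  qed
  finally show ?thesis .
qed

text \<open>Induction on the level k: a level-k map already fixes the coordinates \<open>\<ge> k + 1\<close>,
  and the swaps inside level-(k+1) blocks move points by at most k + 1.\<close>

lemma one_sided_up_to_level:
  "\<exists>\<phi>. bij_betw \<phi> (cube n) (cube n) \<and> fixes_high_coords n k \<phi> \<and> one_sided n k f g \<phi> \<and>
      displacement n \<phi> \<le> (\<Sum>j<k. 2 * (real j + 1) * discrepancy n j f g)"
proof (induction k)
  case 0
  have "one_sided n 0 f g (\<lambda>x. x)"
    by (auto simp: one_sided_def ones_to_zeros_def zeros_to_ones_def high_coords_def)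
  then show ?case
    by (intro exI[of _ "\<lambda>x. x"]) (auto simp: fixes_high_coords_def displacement_def hdist_def bij_betw_def)
next
  case (Suc k)
  then obtain \<phi> where \<phi>: "bij_betw \<phi> (cube n) (cube n)" "fixes_high_coords n k \<phi>"
    "one_sided n k f g \<phi>" "displacement n \<phi> \<le> (\<Sum>j<k. 2 * (real j + 1) * discrepancy n j f g)"
    by blast
  have "fixes_high_coords n (Suc k) \<phi>"
    using \<phi>(2) by (simp add: fixes_high_coords_def high_coords_Suc)
  from one_sided_by_swaps[OF \<phi>(1) this] obtain \<psi> where \<psi>:
    "bij_betw \<psi> (cube n) (cube n)" "fixes_high_coords n (Suc k) \<psi>" "one_sided n (Suc k) f g \<psi>"
    "displacement n \<psi> \<le> displacement n \<phi> + 2 * real (Suc k) * card (ones_to_zeros n f g \<phi>)"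
    by blast
  have "displacement n \<psi> \<le> displacement n \<phi> + 2 * (real k + 1) * card (ones_to_zeros n f g \<phi>)"
    using \<psi>(4) by (simp add: add.commute)
  also have "\<dots> \<le> (\<Sum>j<k. 2 * (real j + 1) * discrepancy n j f g) + 2 * (real k + 1) * discrepancy n k f g"
    using \<phi>(4) card_ones_to_zeros_le_discrepancy[OF \<phi>(1-3)] by (intro add_mono mult_left_mono) auto
  finally have "displacement n \<psi> \<le> (\<Sum>j<Suc k. 2 * (real j + 1) * discrepancy n j f g)"
    by simp
  with \<psi>(1-3) show ?case by blast
qed

text \<open>At level n there is a single block, and f and g have equally many ones in it.\<close>

lemma mapping_with_displacement_le:
  assumes "balanced n f" "balanced n g"
  shows "\<exists>\<phi>. is_mapping n f g \<phi> \<and>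
      displacement n \<phi> \<le> (\<Sum>j<n. 2 * (real j + 1) * discrepancy n j f g)"
proof -
  obtain \<phi> where \<phi>: "bij_betw \<phi> (cube n) (cube n)" "one_sided n n f g \<phi>"
    "displacement n \<phi> \<le> (\<Sum>j<n. 2 * (real j + 1) * discrepancy n j f g)"
    using one_sided_up_to_level by blast
  have "real (card {x\<in>cube n. f x}) - real (card {x\<in>cube n. g x}) = 0"
    using assms by (simp add: balanced_def)
  then have same_card: "card (ones_to_zeros n f g \<phi>) = card (zeros_to_ones n f g \<phi>)"
    using card_diff_eq_mismatch_diff[OF finite_cube \<phi>(1), of f g]
    by (simp add: ones_to_zeros_def zeros_to_ones_def)
  have one_empty: "ones_to_zeros n f g \<phi> = {} \<or> zeros_to_ones n f g \<phi> = {}"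
  proof (rule ccontr)
    assume "\<not> ?thesis"
    then obtain x y where "x \<in> ones_to_zeros n f g \<phi>" "y \<in> zeros_to_ones n f g \<phi>" by blast
    moreover from this have "high_coords n x = high_coords n y"
      by (auto simp: high_coords_def cube_def ones_to_zeros_def zeros_to_ones_def)
    ultimately show False using \<phi>(2) by (auto simp: one_sided_def)
  qed
  have "finite (ones_to_zeros n f g \<phi>)" "finite (zeros_to_ones n f g \<phi>)"
    by (simp_all add: ones_to_zeros_def zeros_to_ones_def)
  with one_empty same_card have "ones_to_zeros n f g \<phi> = {} \<and> zeros_to_ones n f g \<phi> = {}"
    by (metis card_0_eq card.empty)
  then have "\<forall>z\<in>cube n. f z = g (\<phi> z)"
    by (auto simp: ones_to_zeros_def zeros_to_ones_def)
  with \<phi> show ?thesis by (auto simp: is_mapping_def)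
qed

section \<open>Concentration of block counts\<close>

lemma cosh_le_exp_square: "cosh (x::real) \<le> exp (x\<^sup>2 / 2)"
proof -
  have "- (2 * \<bar>x\<bar>) * (1/2) + ln (1 + 1/2 * (exp (2 * \<bar>x\<bar>) - 1)) \<le> (2 * \<bar>x\<bar>)\<^sup>2 / 8"
    by (rule Hoeffdings_lemma_aux) auto
  moreover have "2 * cosh x = exp \<bar>x\<bar> + exp (- \<bar>x\<bar>)"
    using cosh_field_def[of "\<bar>x\<bar>"] by simp
  then have "exp \<bar>x\<bar> * (2 * cosh x) = exp \<bar>x\<bar> * exp \<bar>x\<bar> + exp \<bar>x\<bar> * exp (- \<bar>x\<bar>)"
    by (simp add: distrib_left)
  then have "1 + 1/2 * (exp (2 * \<bar>x\<bar>) - 1) = exp \<bar>x\<bar> * cosh x"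
    by (simp add: exp_add[symmetric] field_simps)
  ultimately have "ln (cosh x) \<le> x\<^sup>2 / 2"
    by (simp add: ln_mult power2_eq_square)
  then show ?thesis
    by (metis cosh_real_pos exp_le_cancel_iff exp_ln)
qed

lemma sum_Pow_exp_card:
  fixes \<mu> :: real
  assumes "finite B"
  shows "(\<Sum>U\<in>Pow B. exp (\<mu> * (real (card U) - real (card B) / 2))) = (2 * cosh (\<mu> / 2)) ^ card B"
  using assms
proof (induction B rule: finite_induct)
  case (insert a B)
  let ?e = "\<lambda>U. exp (\<mu> * (real (card U) - real (card B) / 2))"
  have card_insert_U: "card (insert a U) = Suc (card U)" if "U \<in> Pow B" for U
    using that insert.hyps by (subst card_insert_disjoint) (auto intro: finite_subset)
  have inj: "inj_on (insert a) (Pow B)"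
    using insert.hyps by (intro inj_onI) (metis Diff_insert_absorb PowD subsetD)
  have "(\<Sum>U\<in>Pow (insert a B). exp (\<mu> * (real (card U) - real (card (insert a B)) / 2)))
      = (\<Sum>U\<in>Pow B. ?e U * exp (- \<mu> / 2)) + (\<Sum>U\<in>Pow B. ?e U * exp (\<mu> / 2))"
    unfolding Pow_insert using insert.hyps inj
    by (subst sum.union_disjoint)
       (auto simp: sum.reindex card_insert_U exp_add[symmetric] algebra_simps add_divide_distrib
             intro!: sum.cong)
  also have "\<dots> = (2 * cosh (\<mu> / 2)) * (\<Sum>U\<in>Pow B. ?e U)"
    by (simp add: sum_distrib_left cosh_field_def algebra_simps)
  finally show ?case
    using insert.IH insert.hyps by simp
qed simp

lemma exp_abs_le: "exp (l * \<bar>t\<bar>) \<le> exp (l * t) + exp (- l * t :: real)"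
  by (cases "0 \<le> t") (simp_all add: add_increasing add_increasing2)

lemma sum_Pow_exp_abs_le:
  fixes l :: real
  assumes "finite B"
  shows "(\<Sum>U\<in>Pow B. exp (l * \<bar>real (card U) - real (card B) / 2\<bar>)) \<le> 2 * (2 * exp (l\<^sup>2 / 8)) ^ card B"
proof -
  have "(\<Sum>U\<in>Pow B. exp (l * \<bar>real (card U) - real (card B) / 2\<bar>))
     \<le> (\<Sum>U\<in>Pow B. exp (l * (real (card U) - real (card B) / 2))
                     + exp (- l * (real (card U) - real (card B) / 2)))"
    by (intro sum_mono exp_abs_le)
  also have "\<dots> = 2 * (2 * cosh (l / 2)) ^ card B"
    using sum_Pow_exp_card[OF assms, of l] sum_Pow_exp_card[OF assms, of "- l"]
    by (simp add: sum.distrib)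
  also have "\<dots> \<le> 2 * (2 * exp (l\<^sup>2 / 8)) ^ card B"
    using cosh_le_exp_square[of "l / 2"] by (intro mult_left_mono power_mono) (auto simp: power_divide)
  finally show ?thesis .
qed

lemma sum_Pow_UN_prod:
  fixes h :: "'i \<Rightarrow> 'a set \<Rightarrow> 'b::comm_semiring_1"
  assumes "finite I" "\<And>i. i \<in> I \<Longrightarrow> finite (B i)" "disjoint_family_on B I"
  shows "(\<Sum>T\<in>Pow (\<Union>i\<in>I. B i). \<Prod>i\<in>I. h i (T \<inter> B i)) = (\<Prod>i\<in>I. \<Sum>U\<in>Pow (B i). h i U)"
proof -
  have restrict_UN: "(\<Union>j\<in>I. u j) \<inter> B i = u i" if "u \<in> (\<Pi>\<^sub>E i\<in>I. Pow (B i))" "i \<in> I" for u i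
    using that assms(3) by (fastforce simp: disjoint_family_on_def PiE_iff)
  have restrict_restrict_UN: "restrict (\<lambda>i. (\<Union>j\<in>I. u j) \<inter> B i) I = u"
    if "u \<in> (\<Pi>\<^sub>E i\<in>I. Pow (B i))" for u
    using that restrict_UN[OF that] by (auto simp: PiE_iff extensional_def fun_eq_iff)
  have "(\<Prod>i\<in>I. \<Sum>U\<in>Pow (B i). h i U) = (\<Sum>u\<in>(\<Pi>\<^sub>E i\<in>I. Pow (B i)). \<Prod>i\<in>I. h i (u i))"
    using assms(1,2) by (intro prod_sum_PiE) auto
  also have "\<dots> = (\<Sum>T\<in>Pow (\<Union>i\<in>I. B i). \<Prod>i\<in>I. h i (T \<inter> B i))"
    by (rule sum.reindex_bij_witness[of _ "\<lambda>T. restrict (\<lambda>i. T \<inter> B i) I" "\<lambda>u. \<Union>i\<in>I. u i"])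
       (auto simp: restrict_UN restrict_restrict_UN intro!: prod.cong)
  finally show ?thesis ..
qed

lemma card_superlevel_mult_exp_le:
  fixes E :: "'a \<Rightarrow> real"
  assumes "finite A" "0 \<le> l"
  shows "real (card {T\<in>A. t \<le> E T}) * exp (l * t) \<le> (\<Sum>T\<in>A. exp (l * E T))"
proof -
  have "real (card {T\<in>A. t \<le> E T}) * exp (l * t) = (\<Sum>T\<in>{T\<in>A. t \<le> E T}. exp (l * t))"
    by simp
  also have "\<dots> \<le> (\<Sum>T\<in>{T\<in>A. t \<le> E T}. exp (l * E T))"
    using assms(2) by (intro sum_mono) (auto intro: mult_left_mono)
  also have "\<dots> \<le> (\<Sum>T\<in>A. exp (l * E T))"
    using assms(1) by (intro sum_mono2) auto
  finally show ?thesis .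
qed

lemma card_Pow_imbalance_ge:
  fixes B :: "'i \<Rightarrow> 'a set" and l t :: real
  assumes "finite I" "\<And>i. i \<in> I \<Longrightarrow> finite (B i)" "disjoint_family_on B I" "0 \<le> l"
  shows "real (card {T\<in>Pow (\<Union>i\<in>I. B i). t \<le> (\<Sum>i\<in>I. \<bar>real (card (T \<inter> B i)) - real (card (B i)) / 2\<bar>)})
           * exp (l * t)
         \<le> 2 ^ card I * (2 * exp (l\<^sup>2 / 8)) ^ card (\<Union>i\<in>I. B i)"
proof -
  let ?dev = "\<lambda>i U. \<bar>real (card U) - real (card (B i)) / 2\<bar>"
  have "real (card {T\<in>Pow (\<Union>i\<in>I. B i). t \<le> (\<Sum>i\<in>I. ?dev i (T \<inter> B i))}) * exp (l * t)
      \<le> (\<Sum>T\<in>Pow (\<Union>i\<in>I. B i). exp (l * (\<Sum>i\<in>I. ?dev i (T \<inter> B i))))"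
    using assms(1,2) by (intro card_superlevel_mult_exp_le assms(4)) auto
  also have "\<dots> = (\<Sum>T\<in>Pow (\<Union>i\<in>I. B i). \<Prod>i\<in>I. exp (l * ?dev i (T \<inter> B i)))"
    using assms(1) by (simp add: sum_distrib_left exp_sum)
  also have "\<dots> = (\<Prod>i\<in>I. \<Sum>U\<in>Pow (B i). exp (l * ?dev i U))"
    using assms(1-3) by (rule sum_Pow_UN_prod)
  also have "\<dots> \<le> (\<Prod>i\<in>I. 2 * (2 * exp (l\<^sup>2 / 8)) ^ card (B i))"
    using assms(2) by (intro prod_mono conjI sum_nonneg sum_Pow_exp_abs_le) auto
  also have "\<dots> = 2 ^ card I * (2 * exp (l\<^sup>2 / 8)) ^ card (\<Union>i\<in>I. B i)"
    using assms(1-3) by (simp add: prod.distrib power_sum card_UN_disjoint')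
  finally show ?thesis .
qed

definition imbalance :: "nat \<Rightarrow> nat \<Rightarrow> nat set set \<Rightarrow> real" where
  "imbalance n k T =
     (\<Sum>S\<in>Pow {k..<n}. \<bar>real (card (T \<inter> block n k S)) - real (card (block n k S)) / 2\<bar>)"

lemma cube_eq_UN_block: "cube n = (\<Union>S\<in>Pow {k..<n}. block n k S)"
  using high_coords_in_Pow by (auto simp: block_def)

lemma disjoint_family_on_block: "disjoint_family_on (block n k) I"
  by (auto simp: disjoint_family_on_def block_def)

lemma two_power_le_exp: "(2::real) ^ m \<le> exp (real m)"
proof -
  have "(2::real) ^ m \<le> exp 1 ^ m"
    using exp_ge_add_one_self[of 1] by (intro power_mono) auto
  then show ?thesis by (simp add: exp_of_nat_mult[symmetric])
qed

text \<open>The level-k Chernoff bound with exponent \<open>l = 4 r\<close>, \<open>r = 2\<^sup>-\<^sup>k\<^sup>/\<^sup>3\<close>: there are only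
  \<open>2\<^sup>n\<^sup>-\<^sup>k = 2\<^sup>n r\<^sup>3\<close> blocks, so their number costs less than the gain \<open>exp (-2\<^sup>n r\<^sup>2)\<close>.\<close>

lemma card_Pow_imbalance_level_ge:
  assumes "k \<le> n"
  shows "real (card {T\<in>Pow (cube n). 2 ^ n * 2 powr (- real k / 3) \<le> imbalance n k T})
           \<le> 2 ^ 2 ^ n * exp (- (2 powr (real n / 3)))"
proof -
  define N r where "N = (2::real) ^ n" and "r = (2::real) powr (- real k / 3)"
  define c where "c = real (card {T\<in>Pow (cube n). N * r \<le> imbalance n k T})"
  have r2: "r ^ 2 = 2 powr (- 2 * real k / 3)" and r3: "r ^ 3 = 2 powr (- real k)"
    unfolding r_def by (simp_all add: powr_power)
  have N: "N = 2 powr real n"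
    unfolding N_def by (simp add: powr_realpow)
  have blocks: "real (card (Pow {k..<n})) = N * r ^ 3"
    using assms by (simp add: card_Pow N r3 powr_realpow[symmetric] powr_add[symmetric] of_nat_diff)
  have "c * exp (4 * r * (N * r)) \<le> 2 ^ card (Pow {k..<n}) * (2 * exp ((4 * r)\<^sup>2 / 8)) ^ 2 ^ n"
    using card_Pow_imbalance_ge[of "Pow {k..<n}" "block n k" "4 * r" "N * r"]
    unfolding c_def imbalance_def cube_eq_UN_block[of n k, symmetric]
    by (simp add: block_def disjoint_family_on_block r_def card_cube)
  also have "(2 * exp ((4 * r)\<^sup>2 / 8)) ^ 2 ^ n = 2 ^ 2 ^ n * exp (2 * N * r\<^sup>2)"
    by (simp add: power_mult_distrib N_def exp_of_nat_mult[symmetric] power2_eq_square)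
  also have "2 ^ card (Pow {k..<n}) * \<dots> \<le> exp (N * r ^ 3) * (2 ^ 2 ^ n * exp (2 * N * r\<^sup>2))"
    using two_power_le_exp[of "card (Pow {k..<n})"] by (intro mult_right_mono) (simp_all add: blocks)
  also have "exp (N * r ^ 3) * (2 ^ 2 ^ n * exp (2 * N * r\<^sup>2))
      = 2 ^ 2 ^ n * exp (N * r ^ 3 - 2 * N * r\<^sup>2) * exp (4 * r * (N * r))"
    by (simp add: exp_add[symmetric] power2_eq_square algebra_simps)
  finally have "c \<le> 2 ^ 2 ^ n * exp (N * r ^ 3 - 2 * N * r\<^sup>2)"
    by (rule mult_right_le_imp_le) (rule exp_gt_zero)
  also have "\<dots> \<le> 2 ^ 2 ^ n * exp (- (N * r\<^sup>2))"
  proof -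
    have "r ^ 3 \<le> r\<^sup>2"
      unfolding r2 r3 by (intro powr_mono) auto
    then show ?thesis
      by (auto simp: N_def intro: mult_left_mono)
  qed
  also have "\<dots> \<le> 2 ^ 2 ^ n * exp (- (2 powr (real n / 3)))"
    using assms by (auto simp: N r2 powr_add[symmetric] intro!: powr_mono)
  finally show ?thesis
    unfolding c_def N_def r_def .
qed

section \<open>Counting balanced functions\<close>

definition ones :: "nat \<Rightarrow> (nat set \<Rightarrow> bool) \<Rightarrow> nat set set" where
  "ones n f = {x \<in> cube n. f x}"

lemma inj_on_ones: "inj_on (ones n) (boolfuns n)"
proof (rule inj_onI, rule ext)
  fix f g x assume f: "f \<in> boolfuns n" and g: "g \<in> boolfuns n" and eq: "ones n f = ones n g"
  have "x \<in> ones n f \<longleftrightarrow> x \<in> ones n g" using eq by simp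
  then show "f x = g x"
    using f g by (cases "x \<in> cube n") (auto simp: ones_def boolfuns_def)
qed

lemma balanced_funs_subset_boolfuns: "balanced_funs n \<subseteq> boolfuns n"
  by (auto simp: balanced_funs_def balanced_def)

lemma finite_balanced_funs: "finite (balanced_funs n)"
proof (rule finite_imageD)
  show "finite (ones n ` balanced_funs n)"
    by (rule finite_subset[of _ "Pow (cube n)"]) (auto simp: ones_def)
  show "inj_on (ones n) (balanced_funs n)"
    using inj_on_ones balanced_funs_subset_boolfuns by (rule inj_on_subset)
qed

lemma ones_image_balanced_funs:
  assumes "n > 0"
  shows "ones n ` balanced_funs n = {T. T \<subseteq> cube n \<and> card T = 2 ^ (n - 1)}"
proof -
  have half: "(2::real) ^ n / 2 = real (2 ^ (n - 1))"
    using assms by (cases n) auto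
  have "T \<in> ones n ` balanced_funs n" if "T \<subseteq> cube n" "card T = 2 ^ (n - 1)" for T
  proof
    show "T = ones n (\<lambda>x. x \<in> T)" using that by (auto simp: ones_def)
    have "{x \<in> cube n. x \<in> T} = T" using that(1) by auto
    then show "(\<lambda>x. x \<in> T) \<in> balanced_funs n"
      using that half by (auto simp: balanced_funs_def balanced_def boolfuns_def)
  qed
  moreover have "card (ones n f) = 2 ^ (n - 1)" if "f \<in> balanced_funs n" for f
    using that half by (simp add: balanced_funs_def balanced_def ones_def)
  ultimately show ?thesis
    by (auto simp: ones_def)
qed

lemma card_balanced_funs_ge:
  assumes "n > 0"
  shows "2 ^ 2 ^ n / 2 ^ n \<le> real (card (balanced_funs n))"
proof -
  have two_pow: "(2::nat) ^ n = 2 * 2 ^ (n - 1)"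
    using assms by (cases n) auto
  then have cube: "card (cube n) = 2 * 2 ^ (n - 1)"
    by (simp add: card_cube)
  have "card (balanced_funs n) = card (ones n ` balanced_funs n)"
    using inj_on_subset[OF inj_on_ones balanced_funs_subset_boolfuns] by (simp add: card_image)
  also have "\<dots> = (2 * 2 ^ (n - 1)) choose 2 ^ (n - 1)"
    unfolding ones_image_balanced_funs[OF assms] cube[symmetric] by (rule n_subsets) simp
  finally have "4 ^ 2 ^ (n - 1) / (2 * real (2 ^ (n - 1))) \<le> real (card (balanced_funs n))"
    using central_binomial_lower_bound[of "2 ^ (n - 1)"] by simp
  moreover have "(4::real) ^ 2 ^ (n - 1) = 2 ^ 2 ^ n"
    unfolding two_pow power_mult by simp
  moreover have "2 * real (2 ^ (n - 1)) = 2 ^ n"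
    using arg_cong[OF two_pow, of real] by simp
  ultimately show ?thesis by simp
qed

lemma discrepancy_le_imbalance:
  "discrepancy n k f g \<le> imbalance n k (ones n f) + imbalance n k (ones n g)"
proof -
  have count: "{x \<in> block n k S. h x} = ones n h \<inter> block n k S" for h S
    by (auto simp: ones_def block_def)
  show ?thesis
    unfolding discrepancy_def imbalance_def count sum.distrib[symmetric]
    by (intro sum_mono) linarith
qed

definition typical :: "nat \<Rightarrow> (nat set \<Rightarrow> bool) \<Rightarrow> bool" where
  "typical n f \<longleftrightarrow> (\<forall>k<n. imbalance n k (ones n f) < 2 ^ n * 2 powr (- real k / 3))"

lemma card_atypical_le:
  "real (card {f \<in> balanced_funs n. \<not> typical n f}) \<le> real n * (2 ^ 2 ^ n * exp (- (2 powr (real n / 3))))"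
proof -
  let ?A = "{f \<in> balanced_funs n. \<not> typical n f}"
  let ?Bad = "\<lambda>k. {T\<in>Pow (cube n). 2 ^ n * 2 powr (- real k / 3) \<le> imbalance n k T}"
  have "inj_on (ones n) ?A"
    using balanced_funs_subset_boolfuns by (intro inj_on_subset[OF inj_on_ones]) auto
  then have "card ?A = card (ones n ` ?A)"
    by (rule card_image[symmetric])
  also have "\<dots> \<le> card (\<Union>k<n. ?Bad k)"
  proof (intro card_mono image_subsetI)
    fix f assume "f \<in> ?A"
    then obtain k where "k < n" "2 ^ n * 2 powr (- real k / 3) \<le> imbalance n k (ones n f)"
      by (auto simp: typical_def not_less)
    moreover have "ones n f \<in> Pow (cube n)"
      by (auto simp: ones_def)
    ultimately show "ones n f \<in> (\<Union>k<n. ?Bad k)" by blast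
  qed simp
  also have "\<dots> \<le> (\<Sum>k<n. card (?Bad k))"
    by (rule card_UN_le) simp
  finally have "real (card ?A) \<le> (\<Sum>k<n. real (card (?Bad k)))"
    by (simp flip: of_nat_sum)
  also have "\<dots> \<le> (\<Sum>k<n. 2 ^ 2 ^ n * exp (- (2 powr (real n / 3))))"
    by (intro sum_mono card_Pow_imbalance_level_ge) simp
  finally show ?thesis by simp
qed

lemma sum_succ_mult_power_le:
  fixes r :: real
  assumes "0 \<le> r" "r < 1"
  shows "(\<Sum>j<n. (real j + 1) * r ^ j) \<le> 1 / (1 - r)\<^sup>2"
proof -
  have closed_form: "(1 - r)\<^sup>2 * (\<Sum>j<m. (real j + 1) * r ^ j) = 1 - (real m + 1) * r ^ m + real m * r ^ Suc m"
    for m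
    by (induction m) (simp_all add: power2_eq_square algebra_simps)
  have "0 \<le> r ^ n * ((real n + 1) - real n * r)"
    using assms mult_left_le[of r "real n"] by (intro mult_nonneg_nonneg) auto
  then have "(1 - r)\<^sup>2 * (\<Sum>j<n. (real j + 1) * r ^ j) \<le> 1"
    unfolding closed_form by (simp add: algebra_simps)
  then show ?thesis
    using assms by (simp add: field_simps)
qed

definition stretch_bound :: real where
  "stretch_bound = 1 + 8 / (1 - 2 powr (- 1 / 3))\<^sup>2"

text \<open>For typical f and g the discrepancy at level k is below \<open>2 \<cdot> 2\<^sup>n 2\<^sup>-\<^sup>k\<^sup>/\<^sup>3\<close>, so the
  weights \<open>2 (k + 1)\<close> of the level-by-level construction still sum to \<open>O(2\<^sup>n)\<close>.\<close>

lemma typical_mapping_stretch_le: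
  assumes "balanced n f" "balanced n g" "typical n f" "typical n g" "n > 0"
  shows "\<exists>\<phi>. is_mapping n f g \<phi> \<and> avgStretch n \<phi> \<le> stretch_bound \<and>
              avgStretch n (the_inv_into (cube n) \<phi>) \<le> stretch_bound"
proof -
  define \<rho> :: real where "\<rho> = 2 powr (- 1 / 3)"
  have \<rho>: "0 \<le> \<rho>" "\<rho> < 1"
    unfolding \<rho>_def using powr_less_mono[of "- 1 / 3" 0 2] by simp_all
  have \<rho>_power: "\<rho> ^ k = 2 powr (- real k / 3)" for k
    unfolding \<rho>_def by (simp add: powr_power)
  obtain \<phi> where \<phi>: "is_mapping n f g \<phi>"
    "displacement n \<phi> \<le> (\<Sum>j<n. 2 * (real j + 1) * discrepancy n j f g)"
    using mapping_with_displacement_le[OF assms(1,2)] by blast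
  have "discrepancy n j f g \<le> 2 * (2 ^ n * \<rho> ^ j)" if "j < n" for j
  proof -
    have "imbalance n j (ones n f) < 2 ^ n * \<rho> ^ j" "imbalance n j (ones n g) < 2 ^ n * \<rho> ^ j"
      using assms(3,4) that by (simp_all add: typical_def \<rho>_power)
    then show ?thesis
      using discrepancy_le_imbalance[of n j f g] by linarith
  qed
  then have "(\<Sum>j<n. 2 * (real j + 1) * discrepancy n j f g)
      \<le> (\<Sum>j<n. 2 * (real j + 1) * (2 * (2 ^ n * \<rho> ^ j)))"
    by (intro sum_mono mult_left_mono) auto
  also have "\<dots> = 4 * 2 ^ n * (\<Sum>j<n. (real j + 1) * \<rho> ^ j)"
    by (simp add: sum_distrib_left algebra_simps)
  also have "\<dots> \<le> 4 * 2 ^ n * (1 / (1 - \<rho>)\<^sup>2)"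
    using sum_succ_mult_power_le[OF \<rho>] by (intro mult_left_mono) auto
  finally have "displacement n \<phi> \<le> 4 * 2 ^ n / (1 - \<rho>)\<^sup>2"
    using \<phi>(2) by simp
  then have "2 * displacement n \<phi> / 2 ^ n \<le> 2 * (4 * 2 ^ n / (1 - \<rho>)\<^sup>2) / 2 ^ n"
    by (intro divide_right_mono mult_left_mono) auto
  then have "1 + 2 * displacement n \<phi> / 2 ^ n \<le> stretch_bound"
    by (simp add: stretch_bound_def \<rho>_def)
  moreover have "bij_betw \<phi> (cube n) (cube n)"
    using \<phi>(1) by (simp add: is_mapping_def)
  ultimately show ?thesis
    using \<phi>(1) avgStretch_mapping_le_displacement[OF _ assms(5), of \<phi>] by (meson order_trans)
qed

lemma mapping_stretch_le_dim:
  assumes "balanced n f" "balanced n g"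
  shows "\<exists>\<phi>. is_mapping n f g \<phi> \<and> avgStretch n \<phi> \<le> n \<and> avgStretch n (the_inv_into (cube n) \<phi>) \<le> n"
proof -
  obtain \<phi> where \<phi>: "is_mapping n f g \<phi>"
    using mapping_with_displacement_le[OF assms] by blast
  then have "bij_betw \<phi> (cube n) (cube n)"
    by (simp add: is_mapping_def)
  then have "\<phi> ` cube n \<subseteq> cube n" "the_inv_into (cube n) \<phi> ` cube n \<subseteq> cube n"
    using bij_betw_the_inv_into[of \<phi> "cube n" "cube n"] by (simp_all add: bij_betw_def)
  with \<phi> avgStretch_le_dim show ?thesis by blast
qed

definition pairs_with_mapping :: "nat \<Rightarrow> real \<Rightarrow> ((nat set \<Rightarrow> bool) \<times> (nat set \<Rightarrow> bool)) set" where
  "pairs_with_mapping n C = {(f, g). f \<in> balanced_funs n \<and> g \<in> balanced_funs n \<and>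
     (\<exists>\<phi>. is_mapping n f g \<phi> \<and> avgStretch n \<phi> \<le> C \<and> avgStretch n (the_inv_into (cube n) \<phi>) \<le> C)}"

lemma finite_pairs_with_mapping: "finite (pairs_with_mapping n C)"
  by (rule finite_subset[of _ "balanced_funs n \<times> balanced_funs n"])
     (auto simp: pairs_with_mapping_def finite_balanced_funs)

lemma card_Times_Diff_ge:
  fixes \<epsilon> :: real
  assumes "finite A" "B \<subseteq> A" "2 * real (card B) \<le> \<epsilon> * real (card A)"
  shows "(1 - \<epsilon>) * real (card (A \<times> A)) \<le> real (card ((A - B) \<times> (A - B)))"
proof -
  have "card (A - B) = card A - card B" "card B \<le> card A"
    using assms(1,2) by (simp_all add: card_Diff_subset finite_subset card_mono)
  then have "real (card ((A - B) \<times> (A - B))) = (real (card A) - real (card B))\<^sup>2"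
    by (simp add: card_cartesian_product of_nat_diff power2_eq_square)
  also have "\<dots> \<ge> real (card A) * (real (card A) - 2 * real (card B))"
    by (simp add: power2_eq_square algebra_simps)
  moreover have "real (card A) * (real (card A) - 2 * real (card B)) \<ge> (1 - \<epsilon>) * real (card (A \<times> A))"
    using mult_left_mono[OF assms(3), of "real (card A)"] by (simp add: card_cartesian_product algebra_simps)
  ultimately show ?thesis by linarith
qed

lemma card_pairs_with_mapping_ge_small_dim:
  assumes "real n \<le> C" "0 \<le> \<epsilon>"
  shows "(1 - \<epsilon>) * real (card (balanced_funs n \<times> balanced_funs n)) \<le> real (card (pairs_with_mapping n C))"
proof -
  have "pairs_with_mapping n C = balanced_funs n \<times> balanced_funs n"
    using mapping_stretch_le_dim assms(1)
    by (fastforce simp: pairs_with_mapping_def balanced_funs_def)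
  moreover have "0 \<le> \<epsilon> * real (card (balanced_funs n \<times> balanced_funs n))"
    using assms(2) by simp
  ultimately show ?thesis
    by (simp add: left_diff_distrib)
qed

lemma card_pairs_with_mapping_ge:
  assumes "stretch_bound \<le> C" "n > 0"
    and small: "2 * real n * 2 ^ n * exp (- (2 powr (real n / 3))) \<le> \<epsilon>"
  shows "(1 - \<epsilon>) * real (card (balanced_funs n \<times> balanced_funs n)) \<le> real (card (pairs_with_mapping n C))"
proof -
  let ?A = "balanced_funs n" and ?B = "{f \<in> balanced_funs n. \<not> typical n f}"
  have "0 \<le> 2 * real n * 2 ^ n * exp (- (2 powr (real n / 3)))"
    by simp
  with small have "0 \<le> \<epsilon>" by linarith
  have "2 * real (card ?B) \<le> (2 * real n * 2 ^ n * exp (- (2 powr (real n / 3)))) * (2 ^ 2 ^ n / 2 ^ n)"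
    using card_atypical_le[of n] by (simp add: field_simps)
  also have "\<dots> \<le> \<epsilon> * real (card ?A)"
    using small card_balanced_funs_ge[OF assms(2)] \<open>0 \<le> \<epsilon>\<close> by (intro mult_mono) auto
  finally have "(1 - \<epsilon>) * real (card (?A \<times> ?A)) \<le> real (card ((?A - ?B) \<times> (?A - ?B)))"
    by (intro card_Times_Diff_ge finite_balanced_funs) auto
  moreover have "(f, g) \<in> pairs_with_mapping n C" if "f \<in> ?A - ?B" "g \<in> ?A - ?B" for f g
  proof -
    from that have fg: "balanced n f" "balanced n g" "typical n f" "typical n g"
      by (auto simp: balanced_funs_def)
    then obtain \<phi> where "is_mapping n f g \<phi>" "avgStretch n \<phi> \<le> stretch_bound"
      "avgStretch n (the_inv_into (cube n) \<phi>) \<le> stretch_bound"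
      using typical_mapping_stretch_le assms(2) by blast
    with fg assms(1) show ?thesis
      unfolding pairs_with_mapping_def balanced_funs_def by fastforce
  qed
  then have "(?A - ?B) \<times> (?A - ?B) \<subseteq> pairs_with_mapping n C"
    by auto
  then have "card ((?A - ?B) \<times> (?A - ?B)) \<le> card (pairs_with_mapping n C)"
    by (rule card_mono[OF finite_pairs_with_mapping])
  ultimately show ?thesis by linarith
qed

theorem mainTheorem8:
  shows "\<exists>(c::real) (C::real). c > 0 \<and> (\<forall>n::nat.
     real (card {(f, g). f \<in> balanced_funs n \<and> g \<in> balanced_funs n \<and>
        (\<exists>\<phi>. is_mapping n f g \<phi> \<and> avgStretch n \<phi> \<le> C \<and>
              avgStretch n (the_inv_into (cube n) \<phi>) \<le> C)})
     \<ge> (1 - 2 powr (- (2 powr (c * real n)))) * real (card (balanced_funs n \<times> balanced_funs n)))"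
proof -
  have "eventually (\<lambda>n::nat. 2 * real n * 2 ^ n * exp (- (2 powr (real n / 3)))
          \<le> 2 powr (- (2 powr (1/6 * real n)))) at_top"
    by real_asymp
  then obtain N where N: "\<And>n. N \<le> n \<Longrightarrow> 2 * real n * 2 ^ n * exp (- (2 powr (real n / 3)))
          \<le> 2 powr (- (2 powr (1/6 * real n)))"
    by (auto simp: eventually_at_top_linorder)
  define C where "C = max (real N) stretch_bound"
  have "(1 - 2 powr (- (2 powr (1/6 * real n)))) * real (card (balanced_funs n \<times> balanced_funs n))
      \<le> real (card (pairs_with_mapping n C))" for n
  proof (cases "n \<le> N")
    case True
    then show ?thesis by (intro card_pairs_with_mapping_ge_small_dim) (auto simp: C_def)
  next
    case False
    then show ?thesis by (intro card_pairs_with_mapping_ge N) (auto simp: C_def)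
  qed
  then show ?thesis
    unfolding pairs_with_mapping_def by (intro exI[of _ "1/6"] exI[of _ C]) auto
qed

end
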